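(* Let $s$ and $l$ be two positive integers. Let $p$ be an odd prime such that $p\ge l+2$ and $p-1$ divides none of $sl$ and $ks+1$ for $k=1,\dots,l$. Then the homogeneous multiple harmonic sum satisfies $$H(\{s\}^l; p-1)\equiv S(\{s\}^l; p-1)\equiv 0 \pmod{p^{\mathrm{par}(ls-1)}}.$$ In particular, if $p\ge ls+3$ then the congruence $H(\{s\}^l; p-1)\equiv S(\{s\}^l; p-1)\equiv 0 \pmod{p^{\mathrm{par}(ls-1)}}$ always holds, and so $p\mid H(\{s\}^l; p-1)$.
   Context: For positive integers $s_1,\dots,s_l$ and $n\ge 0$, $H(s_1,\dots,s_l;n)=\sum_{1\le k_1<\dots<k_l\le n} k_1^{-s_1}\cdots k_l^{-s_l}$ and $S(s_1,\dots,s_l;n)=\sum_{1\le k_1\le \dots\le k_l\le n} k_1^{-s_1}\cdots k_l^{-s_l}$. The notation $\{s\}^l$ denotes the sequence $(s,\dots,s)$ with $s$ repeated $l$ times. $\mathrm{par}(m)$ denotes the parity of $m$: it equals $1$ if $m$ is odd and $2$ if $m$ is even. *)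

theory Defs
  imports Complex_Main "HOL-Computational_Algebra.Primes"
begin

definition MHS :: "nat list \<Rightarrow> nat \<Rightarrow> rat" where
  "MHS ss n = (\<Sum>ks \<in> {ks. length ks = length ss \<and> sorted_wrt (<) ks \<and> set ks \<subseteq> {1..n}}.
       \<Prod>i<length ss. 1 / (of_nat (ks ! i)) ^ (ss ! i))"

definition MHSS :: "nat list \<Rightarrow> nat \<Rightarrow> rat" where
  "MHSS ss n = (\<Sum>ks \<in> {ks. length ks = length ss \<and> sorted_wrt (\<le>) ks \<and> set ks \<subseteq> {1..n}}.
       \<Prod>i<length ss. 1 / (of_nat (ks ! i)) ^ (ss ! i))"

definition par :: "nat \<Rightarrow> nat" where
  "par m = (if odd m then 1 else 2)"

text \<open>A rational r is congruent to 0 modulo m (m an integer, here a prime power p^k, k>=1)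
  iff m divides the numerator of r in lowest terms and the denominator is coprime to m;
  for m = p^k this is exactly v_p(r) >= k.\<close>
definition rat_cong0 :: "rat \<Rightarrow> int \<Rightarrow> bool" where
  "rat_cong0 r m = (m dvd fst (quotient_of r) \<and> coprime (snd (quotient_of r)) m)"

end

theory Submission
  imports Defs "HOL-Number_Theory.Number_Theory" "HOL-Combinatorics.Permutations"
begin

(* Let F = (p-1)!. Clearing denominators, F^(ls) H and F^(ls) S become integer sums X over the
   index tuples, and since k^(p(p-1)-1) inverts k modulo p^2, X is congruent modulo p^2 to F^(ls) Y,
   where Y is the sum of (k_1 ... k_l)^m over the same tuples, m = (p(p-1)-1) s.
   Both index sets are mapped onto themselves by relabelling the entries with a permutation of
   {1..p-1} and re-sorting. Relabelling by k -> g k for a primitive root g multiplies Y by g^(ml)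
   modulo p, and g^(ml) is not 1 because ml = -ls mod p-1; hence p divides Y.
   If ls is odd, relabelling by k -> p - k gives Y = -Y + p m Z modulo p^2, where
   Z = sum of (k_1 ... k_l)^m (k_1^(p-2) + ... + k_l^(p-2)) is divisible by p by the primitive
   root argument again, now in degree ml + p - 2 = -(ls+1) mod p-1. Hence p^2 divides 2Y. *)

lemma cong_prod_list_map:
  fixes f g :: "'a \<Rightarrow> 'b::unique_euclidean_semiring"
  assumes "\<And>x. x \<in> set xs \<Longrightarrow> [f x = g x] (mod n)"
  shows "[(\<Prod>x\<leftarrow>xs. f x) = (\<Prod>x\<leftarrow>xs. g x)] (mod n)"
  using assms by (induction xs) (auto intro: cong_mult)

lemma cong_sum_list_map:
  fixes f g :: "'a \<Rightarrow> 'b::unique_euclidean_semiring"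
  assumes "\<And>x. x \<in> set xs \<Longrightarrow> [f x = g x] (mod n)"
  shows "[(\<Sum>x\<leftarrow>xs. f x) = (\<Sum>x\<leftarrow>xs. g x)] (mod n)"
  using assms by (induction xs) (auto intro: cong_add)

lemma prod_list_map_mult:
  fixes f g :: "'a \<Rightarrow> 'b::comm_monoid_mult"
  shows "(\<Prod>x\<leftarrow>xs. f x * g x) = (\<Prod>x\<leftarrow>xs. f x) * (\<Prod>x\<leftarrow>xs. g x)"
  by (induction xs) (simp_all add: ac_simps)

lemma prod_list_map_sort:
  fixes f :: "'a::linorder \<Rightarrow> 'b::comm_monoid_mult"
  shows "(\<Prod>x\<leftarrow>sort xs. f x) = (\<Prod>x\<leftarrow>xs. f x)"
  by (simp flip: prod_mset_prod_list)

lemma sum_list_map_sort: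
  fixes f :: "'a::linorder \<Rightarrow> 'b::comm_monoid_add"
  shows "(\<Sum>x\<leftarrow>sort xs. f x) = (\<Sum>x\<leftarrow>xs. f x)"
  by (simp flip: sum_mset_sum_list)

lemma sort_map_sort:
  fixes f :: "'a::linorder \<Rightarrow> 'b::linorder"
  shows "sort (map f (sort xs)) = sort (map f xs)"
  by (rule properties_for_sort) simp_all

lemma prod_list_one_minus_cong:
  fixes q :: int
  shows "[(\<Prod>x\<leftarrow>xs. 1 - q * f x) = 1 - q * (\<Sum>x\<leftarrow>xs. f x)] (mod q^2)"
proof (induction xs)
  case Nil
  then show ?case by simp
next
  case (Cons x xs)
  let ?S = "\<Sum>x\<leftarrow>xs. f x"
  have "[(1 - q * f x) * (\<Prod>x\<leftarrow>xs. 1 - q * f x) = (1 - q * f x) * (1 - q * ?S)] (mod q^2)"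
    by (rule cong_mult[OF cong_refl Cons.IH])
  moreover have "[(1 - q * f x) * (1 - q * ?S) = 1 - q * (f x + ?S)] (mod q^2)"
    unfolding cong_iff_dvd_diff
    by (rule dvdI[of _ _ "f x * ?S"]) (simp add: algebra_simps power2_eq_square)
  ultimately show ?case by (auto intro: cong_trans)
qed

lemma power_diff_cong_square:
  fixes y k :: int
  shows "[(y - k) ^ Suc n = (-k) ^ Suc n + of_nat (Suc n) * y * (-k) ^ n] (mod y^2)"
proof (induction n)
  case 0
  then show ?case by simp
next
  case (Suc n)
  have "[(y - k) * (y - k) ^ Suc n = (y - k) * ((-k) ^ Suc n + of_nat (Suc n) * y * (-k) ^ n)] (mod y^2)"
    by (rule cong_mult[OF cong_refl Suc.IH])
  moreover have "[(y - k) * ((-k) ^ Suc n + of_nat (Suc n) * y * (-k) ^ n)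
      = (-k) ^ Suc (Suc n) + of_nat (Suc (Suc n)) * y * (-k) ^ Suc n] (mod y^2)"
    unfolding cong_iff_dvd_diff
    by (rule dvdI[of _ _ "of_nat (Suc n) * (-k) ^ n"]) (simp add: algebra_simps power2_eq_square)
  ultimately show ?case by (auto intro: cong_trans)
qed

subsection \<open>Sums over sorted tuples and relabelling\<close>

definition tuples :: "(nat list \<Rightarrow> bool) \<Rightarrow> nat \<Rightarrow> nat \<Rightarrow> nat list set" where
  "tuples R l n = {ks. length ks = l \<and> R ks \<and> set ks \<subseteq> {1..n}}"

definition relabel_closed :: "(nat list \<Rightarrow> bool) \<Rightarrow> bool" where
  "relabel_closed R \<longleftrightarrow> (\<forall>ks. R ks \<longrightarrow> sorted ks) \<and>
     (\<forall>ks f. R ks \<longrightarrow> inj_on f (set ks) \<longrightarrow> R (sort (map f ks)))"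

lemma relabel_closed_strict: "relabel_closed (sorted_wrt (<))"
  unfolding relabel_closed_def by (auto simp: strict_sorted_iff distinct_map)

lemma relabel_closed_weak: "relabel_closed (sorted_wrt (\<le>))"
  unfolding relabel_closed_def by auto

lemma prod_list_conv_prod_nth: "(\<Prod>x\<leftarrow>xs. f x) = (\<Prod>i<length xs. f (xs ! i))"
  by (induction xs) (simp_all add: prod.lessThan_Suc_shift del: prod.lessThan_Suc)

lemma MHS_replicate:
  "MHS (replicate l s) n = (\<Sum>ks\<in>tuples (sorted_wrt (<)) l n. \<Prod>k\<leftarrow>ks. 1 / of_nat k ^ s)"
  unfolding MHS_def tuples_def by (intro sum.cong) (auto simp: prod_list_conv_prod_nth)

lemma MHSS_replicate:
  "MHSS (replicate l s) n = (\<Sum>ks\<in>tuples (sorted_wrt (\<le>)) l n. \<Prod>k\<leftarrow>ks. 1 / of_nat k ^ s)"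
  unfolding MHSS_def tuples_def by (intro sum.cong) (auto simp: prod_list_conv_prod_nth)

lemma sort_map_permutes_in_tuples:
  assumes "relabel_closed R" "\<sigma> permutes {1..n}" "ks \<in> tuples R l n"
  shows "sort (map \<sigma> ks) \<in> tuples R l n"
proof -
  have "inj_on \<sigma> (set ks)"
    using permutes_inj[OF assms(2)] by (auto intro: inj_on_subset)
  moreover have "\<sigma> ` set ks \<subseteq> {1..n}"
    using assms(3) permutes_image[OF assms(2)] unfolding tuples_def by blast
  ultimately show ?thesis
    using assms(1,3) unfolding tuples_def relabel_closed_def by auto
qed

lemma sum_tuples_permute:
  assumes "relabel_closed R" "\<sigma> permutes {1..n}"
  shows "sum \<Phi> (tuples R l n) = (\<Sum>ks\<in>tuples R l n. \<Phi> (sort (map \<sigma> ks)))"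
proof -
  let ?\<tau> = "inv_into UNIV \<sigma>"
  have \<tau>: "?\<tau> permutes {1..n}"
    using assms(2) by (rule permutes_inv)
  have sorted: "sort ks = ks" if "ks \<in> tuples R l n" for ks
    using that assms(1) unfolding tuples_def relabel_closed_def by (auto intro: sorted_sort_id)
  have "map ?\<tau> (map \<sigma> ks) = ks" "map \<sigma> (map ?\<tau> ks) = ks" for ks
    by (simp_all add: map_idI permutes_inverses[OF assms(2)])
  then have inverse: "sort (map ?\<tau> (sort (map \<sigma> ks))) = sort ks"
    "sort (map \<sigma> (sort (map ?\<tau> ks))) = sort ks" for ks
    by (simp_all only: sort_map_sort)
  show ?thesis
    by (rule sum.reindex_bij_witness[where j = "\<lambda>ks. sort (map ?\<tau> ks)" and i = "\<lambda>ks. sort (map \<sigma> ks)"])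
      (simp_all add: inverse sorted sort_map_permutes_in_tuples[OF assms] sort_map_permutes_in_tuples[OF assms(1) \<tau>])
qed

lemma prime_dvd_sum_if_permute_scales:
  fixes \<Phi> :: "nat list \<Rightarrow> int"
  assumes "relabel_closed R" "\<sigma> permutes {1..n}" "prime q"
    and "\<And>ks. ks \<in> tuples R l n \<Longrightarrow> [\<Phi> (sort (map \<sigma> ks)) = c * \<Phi> ks] (mod q)"
    and "\<not> [c = 1] (mod q)"
  shows "q dvd sum \<Phi> (tuples R l n)"
proof -
  let ?S = "sum \<Phi> (tuples R l n)"
  have "?S = (\<Sum>ks\<in>tuples R l n. \<Phi> (sort (map \<sigma> ks)))"
    by (rule sum_tuples_permute[OF assms(1,2)])
  also have "[\<dots> = (\<Sum>ks\<in>tuples R l n. c * \<Phi> ks)] (mod q)"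
    by (rule cong_sum) (rule assms(4))
  also have "(\<Sum>ks\<in>tuples R l n. c * \<Phi> ks) = c * ?S"
    by (simp add: sum_distrib_left)
  finally have "q dvd (c - 1) * ?S"
    by (simp add: cong_iff_dvd_diff dvd_diff_commute left_diff_distrib)
  moreover have "\<not> q dvd (c - 1)"
    using assms(5) by (simp add: cong_iff_dvd_diff)
  ultimately show ?thesis
    using assms(3) prime_dvd_mult_iff by blast
qed

subsection \<open>Multiplication and negation of nonzero residues\<close>

(* Both are extended by the identity outside {1..p-1}, so that they are permutations in the
   sense of permutes. *)

definition mult_residue :: "nat \<Rightarrow> nat \<Rightarrow> nat \<Rightarrow> nat" where
  "mult_residue p g k = (if k \<in> {1..p-1} then g * k mod p else k)"

definition neg_residue :: "nat \<Rightarrow> nat \<Rightarrow> nat" where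
  "neg_residue p k = (if k \<in> {1..p-1} then p - k else k)"

lemma not_dvd_nonzero_residue:
  fixes k p :: nat
  assumes "k \<in> {1..p-1}"
  shows "\<not> p dvd k"
proof
  assume "p dvd k"
  then have "p \<le> k"
    using assms dvd_imp_le[of p k] by auto
  then show False
    using assms by auto
qed

lemma mult_residue_permutes:
  assumes "prime p" "coprime g p"
  shows "mult_residue p g permutes {1..p-1}"
proof -
  have p: "p > 1"
    using assms(1) prime_gt_1_nat by blast
  have "\<not> p dvd g"
    using assms coprime_absorb_right not_prime_unit by blast
  have inj: "inj_on (mult_residue p g) {1..p-1}"
  proof (rule inj_onI)
    fix x y assume x: "x \<in> {1..p-1}" and y: "y \<in> {1..p-1}"
      and "mult_residue p g x = mult_residue p g y"
    then have "[g * x = g * y] (mod p)"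
      unfolding mult_residue_def cong_def by simp
    then have "[x = y] (mod p)"
      using assms(2) by (simp add: cong_mult_lcancel_nat coprime_commute)
    then show "x = y"
      using x y p unfolding cong_def by auto
  qed
  have "g * k mod p \<in> {1..p-1}" if "k \<in> {1..p-1}" for k
  proof -
    have "\<not> p dvd g * k"
      using \<open>\<not> p dvd g\<close> not_dvd_nonzero_residue[OF that] assms(1) prime_dvd_mult_iff by blast
    then have "g * k mod p \<noteq> 0"
      by (simp add: dvd_eq_mod_eq_0)
    moreover have "g * k mod p < p"
      using p by simp
    ultimately show ?thesis
      by simp
  qed
  then have "mult_residue p g ` {1..p-1} \<subseteq> {1..p-1}"
    by (auto simp: mult_residue_def)
  then have "bij_betw (mult_residue p g) {1..p-1} {1..p-1}"
    using inj by (simp add: bij_betw_def endo_inj_surj)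
  then show ?thesis
    by (rule bij_imp_permutes) (auto simp: mult_residue_def)
qed

lemma neg_residue_permutes: "neg_residue p permutes {1..p-1}"
proof -
  have inj: "inj_on (neg_residue p) {1..p-1}"
    by (rule inj_onI) (auto simp: neg_residue_def)
  moreover have "neg_residue p ` {1..p-1} \<subseteq> {1..p-1}"
    by (auto simp: neg_residue_def)
  ultimately have "bij_betw (neg_residue p) {1..p-1} {1..p-1}"
    by (simp add: bij_betw_def endo_inj_surj)
  then show ?thesis
    by (rule bij_imp_permutes) (auto simp: neg_residue_def)
qed

lemma int_mult_residue_cong:
  assumes "k \<in> {1..p-1}"
  shows "[int (mult_residue p g k) = int g * int k] (mod int p)"
  using assms by (simp add: mult_residue_def cong_def zmod_int)

lemma int_neg_residue:
  assumes "k \<in> {1..p-1}"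
  shows "int (neg_residue p k) = int p - int k"
  using assms by (auto simp: neg_residue_def of_nat_diff)

subsection \<open>Divisibility by p\<close>

lemma prime_dvd_sum_tuples_if_homogeneous:
  fixes \<Phi> :: "nat list \<Rightarrow> int"
  assumes "relabel_closed R" "prime p" "\<not> (p - 1) dvd d"
    and "\<And>g ks. coprime g p \<Longrightarrow> ks \<in> tuples R l (p-1) \<Longrightarrow>
           [\<Phi> (sort (map (mult_residue p g) ks)) = int g ^ d * \<Phi> ks] (mod int p)"
  shows "int p dvd sum \<Phi> (tuples R l (p-1))"
proof -
  obtain g where "residue_primroot p g"
    using prime_primitive_root_exists[OF _ assms(2)] prime_ge_2_nat[OF assms(2)] by auto
  then have g: "coprime g p" "ord p g = p - 1"
    by (auto simp: residue_primroot_def totient_prime[OF assms(2)] coprime_commute)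
  have "\<not> [g ^ d = 1] (mod p)"
    using assms(3) g(2) ord_divides' by auto
  then have "\<not> [int g ^ d = 1] (mod int p)"
    by (metis cong_int_iff of_nat_1 of_nat_power)
  then show ?thesis
    using assms(2,4) g(1)
    by (intro prime_dvd_sum_if_permute_scales[OF assms(1) mult_residue_permutes[OF assms(2) g(1)]]) auto
qed

lemma pow_mult_residue_cong:
  assumes "k \<in> {1..p-1}"
  shows "[int (mult_residue p g k) ^ m = int g ^ m * int k ^ m] (mod int p)"
  using cong_pow[OF int_mult_residue_cong[OF assms]] by (simp add: power_mult_distrib)

lemma pow_prod_mult_residue_cong:
  assumes "set ks \<subseteq> {1..p-1}"
  shows "[(\<Prod>k\<leftarrow>sort (map (mult_residue p g) ks). int k ^ m)
          = int g ^ (m * length ks) * (\<Prod>k\<leftarrow>ks. int k ^ m)] (mod int p)"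
proof -
  have "(\<Prod>k\<leftarrow>sort (map (mult_residue p g) ks). int k ^ m) = (\<Prod>k\<leftarrow>ks. int (mult_residue p g k) ^ m)"
    by (simp add: prod_list_map_sort o_def)
  also have "[\<dots> = (\<Prod>k\<leftarrow>ks. int g ^ m * int k ^ m)] (mod int p)"
    using assms by (intro cong_prod_list_map pow_mult_residue_cong) auto
  also have "(\<Prod>k\<leftarrow>ks. int g ^ m * int k ^ m) = int g ^ (m * length ks) * (\<Prod>k\<leftarrow>ks. int k ^ m)"
    by (simp add: prod_list_map_mult map_replicate_const power_mult)
  finally show ?thesis .
qed

lemma pow_sum_mult_residue_cong:
  assumes "set ks \<subseteq> {1..p-1}"
  shows "[(\<Sum>k\<leftarrow>sort (map (mult_residue p g) ks). int k ^ e)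
          = int g ^ e * (\<Sum>k\<leftarrow>ks. int k ^ e)] (mod int p)"
proof -
  have "(\<Sum>k\<leftarrow>sort (map (mult_residue p g) ks). int k ^ e) = (\<Sum>k\<leftarrow>ks. int (mult_residue p g k) ^ e)"
    by (simp add: sum_list_map_sort o_def)
  also have "[\<dots> = (\<Sum>k\<leftarrow>ks. int g ^ e * int k ^ e)] (mod int p)"
    using assms by (intro cong_sum_list_map pow_mult_residue_cong) auto
  also have "(\<Sum>k\<leftarrow>ks. int g ^ e * int k ^ e) = int g ^ e * (\<Sum>k\<leftarrow>ks. int k ^ e)"
    by (rule sum_list_const_mult)
  finally show ?thesis .
qed

lemma prime_dvd_sum_pow_prod:
  assumes "relabel_closed R" "prime p" "\<not> (p - 1) dvd (m * l)"
  shows "int p dvd (\<Sum>ks\<in>tuples R l (p-1). \<Prod>k\<leftarrow>ks. int k ^ m)"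
  using assms by (intro prime_dvd_sum_tuples_if_homogeneous)
    (auto simp: tuples_def pow_prod_mult_residue_cong)

lemma prime_dvd_sum_pow_prod_pow_sum:
  assumes "relabel_closed R" "prime p" "\<not> (p - 1) dvd (m * l + e)"
  shows "int p dvd (\<Sum>ks\<in>tuples R l (p-1). (\<Prod>k\<leftarrow>ks. int k ^ m) * (\<Sum>k\<leftarrow>ks. int k ^ e))"
proof (rule prime_dvd_sum_tuples_if_homogeneous[OF assms])
  fix g ks assume "ks \<in> tuples R l (p-1)"
  then have ks: "set ks \<subseteq> {1..p-1}" "length ks = l"
    by (auto simp: tuples_def)
  have "[(\<Prod>k\<leftarrow>sort (map (mult_residue p g) ks). int k ^ m) * (\<Sum>k\<leftarrow>sort (map (mult_residue p g) ks). int k ^ e)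
      = (int g ^ (m * l) * (\<Prod>k\<leftarrow>ks. int k ^ m)) * (int g ^ e * (\<Sum>k\<leftarrow>ks. int k ^ e))] (mod int p)"
    using cong_mult[OF pow_prod_mult_residue_cong[OF ks(1), where g = g and m = m]
        pow_sum_mult_residue_cong[OF ks(1), where g = g and e = e]] ks(2) by simp
  then show "[(\<Prod>k\<leftarrow>sort (map (mult_residue p g) ks). int k ^ m) * (\<Sum>k\<leftarrow>sort (map (mult_residue p g) ks). int k ^ e)
      = int g ^ (m * l + e) * ((\<Prod>k\<leftarrow>ks. int k ^ m) * (\<Sum>k\<leftarrow>ks. int k ^ e))] (mod int p)"
    by (simp add: power_add ac_simps)
qed

subsection \<open>Divisibility by p squared\<close>

lemma div_cong_mult_inverse_prime_square:
  assumes "prime p" "\<not> p dvd k" "int k dvd F"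
  shows "[F div int k = F * int k ^ (p * (p - 1) - 1)] (mod (int p)^2)"
proof -
  have "coprime p k"
    using assms(1,2) by (rule prime_imp_coprime)
  then have "coprime k (p^2)"
    by (simp add: coprime_commute)
  then have "[k ^ totient (p^2) = 1] (mod p^2)"
    by (rule euler_theorem)
  then have euler: "[int k ^ (p * (p - 1)) = 1] (mod (int p)^2)"
    using totient_prime_power[OF assms(1), of 2] by (simp add: cong_int_iff[symmetric])
  obtain q where F: "F = int k * q"
    using assms(3) by blast
  have "p * (p - 1) = Suc (p * (p - 1) - 1)"
    using prime_ge_2_nat[OF assms(1)] by (simp add: Suc_diff_1)
  then have "F * int k ^ (p * (p - 1) - 1) = q * int k ^ (p * (p - 1))"
    unfolding F by (metis mult.assoc mult.commute power_Suc)
  also have "[\<dots> = q] (mod (int p)^2)"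
    using cong_mult[OF cong_refl euler, of q] by simp
  finally show ?thesis
    using assms(2) F by (simp add: cong_sym)
qed

lemma neg_power_cong_prime_square:
  assumes "prime p" "\<not> p dvd k" "odd m"
  shows "[(int p - int k) ^ m = - (int k ^ m * (1 - int p * (int m * int k ^ (p - 2))))] (mod (int p)^2)"
proof -
  obtain n where m: "m = Suc n" and "even n"
    using assms(3) by (cases m) auto
  have "[k ^ (p - 1) = 1] (mod p)"
    using fermat_theorem[OF assms(1,2)] .
  then have "[int k ^ (p - 1) = 1] (mod int p)"
    by (metis cong_int_iff of_nat_1 of_nat_power)
  then have "[int p * (int k ^ n * int k ^ (p - 1)) = int p * (int k ^ n * 1)] (mod (int p)^2)"
    unfolding power2_eq_square by (intro cong_cmult_leftI cong_mult cong_refl)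
  moreover have "n + (p - 1) = m + (p - 2)"
    using m prime_ge_2_nat[OF assms(1)] by simp
  ultimately have fermat: "[int p * (int k ^ m * int k ^ (p - 2)) = int p * int k ^ n] (mod (int p)^2)"
    by (simp flip: power_add)
  have "[(int p - int k) ^ m = (- int k) ^ Suc n + of_nat (Suc n) * int p * (- int k) ^ n] (mod (int p)^2)"
    unfolding m by (rule power_diff_cong_square)
  also have "(- int k) ^ Suc n + of_nat (Suc n) * int p * (- int k) ^ n = - (int k ^ m) + int m * (int p * int k ^ n)"
    using \<open>even n\<close> by (simp add: m)
  also have "[- (int k ^ m) + int m * (int p * int k ^ n)
      = - (int k ^ m) + int m * (int p * (int k ^ m * int k ^ (p - 2)))] (mod (int p)^2)"
    by (intro cong_add cong_mult cong_refl cong_sym[OF fermat])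
  also have "- (int k ^ m) + int m * (int p * (int k ^ m * int k ^ (p - 2)))
      = - (int k ^ m * (1 - int p * (int m * int k ^ (p - 2))))"
    by (simp add: algebra_simps)
  finally show ?thesis .
qed

lemma pow_prod_neg_residue_cong:
  assumes "prime p" "odd m" "odd (length ks)" "set ks \<subseteq> {1..p-1}"
  shows "[(\<Prod>k\<leftarrow>sort (map (neg_residue p) ks). int k ^ m)
          = - (\<Prod>k\<leftarrow>ks. int k ^ m) + int p * int m * ((\<Prod>k\<leftarrow>ks. int k ^ m) * (\<Sum>k\<leftarrow>ks. int k ^ (p - 2)))]
         (mod (int p)^2)"
proof -
  let ?P = "\<Prod>k\<leftarrow>ks. int k ^ m"
  let ?f = "\<lambda>k. int m * int k ^ (p - 2)"
  have "int (neg_residue p k) = int p - int k" if "k \<in> set ks" for k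
    using assms(4) that int_neg_residue by blast
  then have "(\<Prod>k\<leftarrow>sort (map (neg_residue p) ks). int k ^ m) = (\<Prod>k\<leftarrow>ks. (int p - int k) ^ m)"
    by (simp add: prod_list_map_sort o_def cong: map_cong)
  also have "[(\<Prod>k\<leftarrow>ks. (int p - int k) ^ m) = (\<Prod>k\<leftarrow>ks. (-1) * (int k ^ m * (1 - int p * ?f k)))] (mod (int p)^2)"
  proof (rule cong_prod_list_map)
    fix k assume "k \<in> set ks"
    then have "\<not> p dvd k"
      using assms(4) not_dvd_nonzero_residue by blast
    then show "[(int p - int k) ^ m = (-1) * (int k ^ m * (1 - int p * ?f k))] (mod (int p)^2)"
      using neg_power_cong_prime_square[OF assms(1) _ assms(2)] by simp
  qed
  also have "(\<Prod>k\<leftarrow>ks. (-1) * (int k ^ m * (1 - int p * ?f k))) = - (?P * (\<Prod>k\<leftarrow>ks. 1 - int p * ?f k))"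
    using assms(3) by (simp only: prod_list_map_mult map_replicate_const prod_list_replicate) simp
  also have "[- (?P * (\<Prod>k\<leftarrow>ks. 1 - int p * ?f k)) = - (?P * (1 - int p * (\<Sum>k\<leftarrow>ks. ?f k)))] (mod (int p)^2)"
    by (intro cong_minus_minus_iff[THEN iffD2] cong_mult cong_refl prod_list_one_minus_cong)
  also have "- (?P * (1 - int p * (\<Sum>k\<leftarrow>ks. ?f k))) = - ?P + int p * int m * (?P * (\<Sum>k\<leftarrow>ks. int k ^ (p - 2)))"
    by (simp add: sum_list_const_mult algebra_simps)
  finally show ?thesis .
qed

lemma prime_square_dvd_sum_pow_prod:
  assumes "relabel_closed R" "prime p" "odd p" "odd m" "odd l"
    and "\<not> (p - 1) dvd (m * l + (p - 2))"
  shows "(int p)^2 dvd (\<Sum>ks\<in>tuples R l (p-1). \<Prod>k\<leftarrow>ks. int k ^ m)"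
proof -
  let ?A = "tuples R l (p-1)"
  let ?P = "\<lambda>ks. \<Prod>k\<leftarrow>ks. int k ^ m"
  let ?B = "\<lambda>ks. \<Sum>k\<leftarrow>ks. int k ^ (p - 2)"
  let ?Y = "sum ?P ?A"
  obtain t where t: "(\<Sum>ks\<in>?A. ?P ks * ?B ks) = int p * t"
    using prime_dvd_sum_pow_prod_pow_sum[OF assms(1,2,6)] by blast
  have "?Y = (\<Sum>ks\<in>?A. ?P (sort (map (neg_residue p) ks)))"
    by (rule sum_tuples_permute[OF assms(1) neg_residue_permutes])
  also have "[\<dots> = (\<Sum>ks\<in>?A. - ?P ks + int p * int m * (?P ks * ?B ks))] (mod (int p)^2)"
    using assms(2,4,5) by (intro cong_sum pow_prod_neg_residue_cong) (auto simp: tuples_def)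
  also have "(\<Sum>ks\<in>?A. - ?P ks + int p * int m * (?P ks * ?B ks)) = - ?Y + int p * int m * (\<Sum>ks\<in>?A. ?P ks * ?B ks)"
    by (simp add: sum.distrib sum_subtractf sum_distrib_left)
  also have "\<dots> = - ?Y + (int p)^2 * (int m * t)"
    by (simp only: t) (simp add: power2_eq_square algebra_simps)
  finally have "(int p)^2 dvd ?Y - (- ?Y + (int p)^2 * (int m * t))"
    unfolding cong_iff_dvd_diff .
  then have "(int p)^2 dvd (?Y - (- ?Y + (int p)^2 * (int m * t))) + (int p)^2 * (int m * t)"
    by (rule dvd_add) simp
  then have "(int p)^2 dvd 2 * ?Y"
    by (simp add: algebra_simps)
  moreover have "coprime ((int p)^2) 2"
    using assms(3) by (simp add: coprime_right_2_iff_odd)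
  ultimately show ?thesis
    using coprime_dvd_mult_right_iff by blast
qed

lemma dvd_summand_iff:
  fixes d :: nat
  assumes "d dvd a + b"
  shows "d dvd a \<longleftrightarrow> d dvd b"
  using assms dvd_add_right_iff dvd_add_left_iff by blast

(* Since p (p - 1) - 1 = -1 mod p - 1, the exponent m = (p (p - 1) - 1) s used below
   turns the degrees m l and m l + (p - 2) into -s l and -(l s + 1) modulo p - 1. *)

lemma dvd_inverse_exponent_iff:
  fixes p s l :: nat
  assumes "p \<ge> 2"
  shows "(p - 1) dvd ((p * (p - 1) - 1) * s * l) \<longleftrightarrow> (p - 1) dvd (s * l)"
    and "(p - 1) dvd ((p * (p - 1) - 1) * s * l + (p - 2)) \<longleftrightarrow> (p - 1) dvd (l * s + 1)"
proof -
  have "p * (p - 1) - 1 + 1 = p * (p - 1)"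
    using assms by (simp add: one_le_mult_iff)
  then have ml: "(p * (p - 1) - 1) * s * l + s * l = p * (p - 1) * (s * l)"
    by (metis add_mult_distrib mult.assoc mult_1)
  then show "(p - 1) dvd ((p * (p - 1) - 1) * s * l) \<longleftrightarrow> (p - 1) dvd (s * l)"
    by (intro dvd_summand_iff) simp
  have "l * s = s * l"
    by simp
  then have sum: "((p * (p - 1) - 1) * s * l + (p - 2)) + (l * s + 1) = p * (p - 1) * (s * l) + (p - 1)"
    using ml assms by linarith
  have "(p - 1) dvd p * (p - 1) * (s * l) + (p - 1)"
    by (intro dvd_add) simp_all
  then have "(p - 1) dvd ((p * (p - 1) - 1) * s * l + (p - 2)) + (l * s + 1)"
    by (simp only: sum)
  then show "(p - 1) dvd ((p * (p - 1) - 1) * s * l + (p - 2)) \<longleftrightarrow> (p - 1) dvd (l * s + 1)"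
    by (rule dvd_summand_iff)
qed

lemma prime_power_par_dvd_sum_pow_prod:
  assumes "relabel_closed R" "prime p" "odd p"
    and "\<not> (p - 1) dvd (s * l)" "\<not> (p - 1) dvd (l * s + 1)"
  shows "int p ^ par (l * s - 1) dvd (\<Sum>ks\<in>tuples R l (p-1). \<Prod>k\<leftarrow>ks. int k ^ ((p * (p - 1) - 1) * s))"
proof -
  define m where "m = (p * (p - 1) - 1) * s"
  have p: "p \<ge> 2"
    using assms(2) by (rule prime_ge_2_nat)
  have "l * s \<noteq> 0"
    using assms(4) dvd_0_right[of "p - 1"] by (metis mult.commute)
  show ?thesis
  proof (cases "odd (l * s)")
    case True
    have "even (p * (p - 1))"
      by auto
    moreover have "p * (p - 1) - 1 + 1 = p * (p - 1)"
      using p by (simp add: one_le_mult_iff)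
    ultimately have "odd (p * (p - 1) - 1)"
      by (metis even_plus_one_iff)
    then have "odd m" "odd l"
      using True by (simp_all add: m_def)
    moreover have "\<not> (p - 1) dvd (m * l + (p - 2))"
      using assms(5) dvd_inverse_exponent_iff(2)[OF p] by (simp add: m_def)
    ultimately have "(int p)^2 dvd (\<Sum>ks\<in>tuples R l (p-1). \<Prod>k\<leftarrow>ks. int k ^ m)"
      using prime_square_dvd_sum_pow_prod[OF assms(1-3)] by blast
    moreover have "par (l * s - 1) = 2"
      using True by (simp add: par_def even_diff_nat)
    ultimately show ?thesis
      by (simp add: m_def)
  next
    case False
    have "\<not> (p - 1) dvd (m * l)"
      using assms(4) dvd_inverse_exponent_iff(1)[OF p] by (simp add: m_def)
    then have "int p dvd (\<Sum>ks\<in>tuples R l (p-1). \<Prod>k\<leftarrow>ks. int k ^ m)"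
      by (rule prime_dvd_sum_pow_prod[OF assms(1,2)])
    moreover have "par (l * s - 1) = 1"
      using False \<open>l * s \<noteq> 0\<close> by (simp add: par_def even_diff_nat)
    ultimately show ?thesis
      by (simp add: m_def)
  qed
qed

subsection \<open>Clearing denominators\<close>

lemma int_dvd_fact:
  assumes "k \<in> {1..n}"
  shows "int k dvd fact n"
  using assms by (metis atLeastAtMost_iff dvd_fact int_dvd_int_iff of_nat_fact)

lemma cleared_sum_cong:
  assumes "prime p"
  shows "[(\<Sum>ks\<in>tuples R l (p-1). \<Prod>k\<leftarrow>ks. ((fact (p-1) :: int) div int k) ^ s)
          = (fact (p-1) :: int) ^ (s * l) * (\<Sum>ks\<in>tuples R l (p-1). \<Prod>k\<leftarrow>ks. int k ^ ((p * (p - 1) - 1) * s))]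
         (mod (int p)^2)"
proof -
  let ?F = "(fact (p-1) :: int)"
  let ?m = "(p * (p - 1) - 1) * s"
  have "[(\<Prod>k\<leftarrow>ks. (?F div int k) ^ s) = ?F ^ (s * l) * (\<Prod>k\<leftarrow>ks. int k ^ ?m)] (mod (int p)^2)"
    if "ks \<in> tuples R l (p-1)" for ks
  proof -
    have "[(\<Prod>k\<leftarrow>ks. (?F div int k) ^ s) = (\<Prod>k\<leftarrow>ks. ?F ^ s * int k ^ ?m)] (mod (int p)^2)"
    proof (rule cong_prod_list_map)
      fix k assume "k \<in> set ks"
      then have "k \<in> {1..p-1}"
        using that by (auto simp: tuples_def)
      then have "[?F div int k = ?F * int k ^ (p * (p - 1) - 1)] (mod (int p)^2)"
        by (intro div_cong_mult_inverse_prime_square assms not_dvd_nonzero_residue int_dvd_fact)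
      then show "[(?F div int k) ^ s = ?F ^ s * int k ^ ?m] (mod (int p)^2)"
        by (metis cong_pow power_mult power_mult_distrib)
    qed
    also have "(\<Prod>k\<leftarrow>ks. ?F ^ s * int k ^ ?m) = ?F ^ (s * l) * (\<Prod>k\<leftarrow>ks. int k ^ ?m)"
      using that by (simp add: tuples_def prod_list_map_mult map_replicate_const power_mult)
    finally show ?thesis .
  qed
  then show ?thesis
    unfolding sum_distrib_left by (rule cong_sum)
qed

lemma fact_pow_mult_prod_inverse_powers:
  assumes "set ks \<subseteq> {1..n}"
  shows "fact n ^ (s * length ks) * (\<Prod>k\<leftarrow>ks. 1 / of_nat k ^ s)
       = (of_int (\<Prod>k\<leftarrow>ks. (fact n div int k) ^ s) :: 'a::field_char_0)"
  using assms
proof (induction ks)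
  case Nil
  then show ?case by simp
next
  case (Cons k ks)
  then have "k \<in> {1..n}"
    by simp
  then have "(fact n :: 'a) = of_nat k * of_int (fact n div int k)"
    by (metis int_dvd_fact dvd_mult_div_cancel of_int_fact of_int_mult of_int_of_nat_eq)
  then have "fact n ^ s * (1 / of_nat k ^ s) = (of_int ((fact n div int k) ^ s) :: 'a)"
    using \<open>k \<in> {1..n}\<close> by (simp add: power_mult_distrib)
  moreover have "fact n ^ (s * length (k # ks)) * (\<Prod>x\<leftarrow>k # ks. 1 / of_nat x ^ s)
      = (fact n ^ s * (1 / of_nat k ^ s)) * (fact n ^ (s * length ks) * (\<Prod>x\<leftarrow>ks. 1 / (of_nat x ^ s) :: 'a))"
    by (simp add: power_add ac_simps)
  ultimately show ?case
    using Cons by simp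
qed

lemma fact_pow_mult_sum_tuples:
  "fact n ^ (s * l) * (\<Sum>ks\<in>tuples R l n. \<Prod>k\<leftarrow>ks. 1 / of_nat k ^ s)
     = (of_int (\<Sum>ks\<in>tuples R l n. \<Prod>k\<leftarrow>ks. (fact n div int k) ^ s) :: 'a::field_char_0)"
  by (auto simp: sum_distrib_left tuples_def fact_pow_mult_prod_inverse_powers intro!: sum.cong)

lemma rat_cong0_if_cleared:
  fixes r :: rat and d X m :: int
  assumes "coprime d m" "of_int d * r = of_int X" "m dvd X"
  shows "rat_cong0 r m"
proof -
  obtain a b where q: "quotient_of r = (a, b)"
    by (cases "quotient_of r")
  have "b > 0" "coprime a b" "r = of_int a / of_int b"
    using quotient_of_denom_pos[OF q] quotient_of_coprime[OF q] quotient_of_div[OF q] by auto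
  with assms(2) have "rat_of_int (d * a) = rat_of_int (X * b)"
    by (simp add: field_simps)
  then have eq: "d * a = X * b"
    by (simp only: of_int_eq_iff)
  have "coprime m d" "coprime b a"
    using assms(1) \<open>coprime a b\<close> by (simp_all add: coprime_commute)
  have "m dvd d * a"
    unfolding eq using assms(3) by simp
  then have "m dvd a"
    using coprime_dvd_mult_right_iff[OF \<open>coprime m d\<close>] by blast
  have "b dvd d * a"
    unfolding eq by simp
  then have "b dvd d"
    using coprime_dvd_mult_left_iff[OF \<open>coprime b a\<close>] by blast
  then have "coprime b m"
    using coprime_divisors[OF _ dvd_refl assms(1)] by blast
  with \<open>m dvd a\<close> show ?thesis
    unfolding rat_cong0_def q by simp
qed

lemma rat_cong0_dvd:
  assumes "rat_cong0 r m" "m' dvd m"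
  shows "rat_cong0 r m'"
  using assms dvd_trans coprime_divisors[OF dvd_refl assms(2)] unfolding rat_cong0_def by blast

lemma coprime_fact_pred_prime:
  assumes "prime p"
  shows "coprime (fact (p - 1) :: int) (int p)"
proof -
  have "\<not> p dvd fact (p - 1)"
    using assms prime_gt_0_nat[OF assms] by (simp add: prime_dvd_fact_iff)
  then have "coprime (fact (p - 1)) p"
    using prime_imp_coprime[OF assms] coprime_commute by blast
  then show ?thesis
    by (metis coprime_int_iff of_nat_fact)
qed

lemma rat_cong0_sum_tuples:
  assumes "relabel_closed R" "prime p" "odd p"
    and "\<not> (p - 1) dvd (s * l)" "\<not> (p - 1) dvd (l * s + 1)"
  shows "rat_cong0 (\<Sum>ks\<in>tuples R l (p-1). \<Prod>k\<leftarrow>ks. 1 / of_nat k ^ s) (int p ^ par (l * s - 1))"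
proof -
  let ?F = "(fact (p-1) :: int)"
  let ?X = "\<Sum>ks\<in>tuples R l (p-1). \<Prod>k\<leftarrow>ks. (?F div int k) ^ s"
  let ?Y = "\<Sum>ks\<in>tuples R l (p-1). \<Prod>k\<leftarrow>ks. int k ^ ((p * (p - 1) - 1) * s)"
  have "int p ^ par (l * s - 1) dvd (int p)^2"
    by (rule le_imp_power_dvd) (simp add: par_def)
  then have "[?X = ?F ^ (s * l) * ?Y] (mod int p ^ par (l * s - 1))"
    by (rule cong_dvd_modulus[OF cleared_sum_cong[OF assms(2)]])
  moreover have "int p ^ par (l * s - 1) dvd ?F ^ (s * l) * ?Y"
    using prime_power_par_dvd_sum_pow_prod[OF assms] by simp
  ultimately have "int p ^ par (l * s - 1) dvd ?X"
    using cong_dvd_iff by blast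
  moreover have "coprime (?F ^ (s * l)) (int p ^ par (l * s - 1))"
    using coprime_fact_pred_prime[OF assms(2)] by simp
  moreover have "of_int (?F ^ (s * l)) * (\<Sum>ks\<in>tuples R l (p-1). \<Prod>k\<leftarrow>ks. 1 / of_nat k ^ s) = (of_int ?X :: rat)"
    using fact_pow_mult_sum_tuples[where 'a = rat, of "p - 1" s l R] by simp
  ultimately show ?thesis
    using rat_cong0_if_cleared by blast
qed

theorem theorem2p14:
  fixes s l p :: nat
  assumes "s > 0" and "l > 0" and "prime p" and "odd p"
  shows "((p \<ge> l + 2 \<and> \<not> (p - 1) dvd (s * l) \<and> (\<forall>k\<in>{1..l}. \<not> (p - 1) dvd (k * s + 1))) \<longrightarrow>
            rat_cong0 (MHS (replicate l s) (p - 1)) (int p ^ par (l * s - 1)) \<and>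
            rat_cong0 (MHSS (replicate l s) (p - 1)) (int p ^ par (l * s - 1))) \<and>
         (p \<ge> l * s + 3 \<longrightarrow>
            rat_cong0 (MHS (replicate l s) (p - 1)) (int p ^ par (l * s - 1)) \<and>
            rat_cong0 (MHSS (replicate l s) (p - 1)) (int p ^ par (l * s - 1)) \<and>
            rat_cong0 (MHS (replicate l s) (p - 1)) (int p))"
proof -
  let ?q = "int p ^ par (l * s - 1)"
  have congs: "rat_cong0 (MHS (replicate l s) (p - 1)) ?q \<and> rat_cong0 (MHSS (replicate l s) (p - 1)) ?q \<and>
               rat_cong0 (MHS (replicate l s) (p - 1)) (int p)"
    if "\<not> (p - 1) dvd (s * l)" "\<not> (p - 1) dvd (l * s + 1)"
  proof -
    have H: "rat_cong0 (MHS (replicate l s) (p - 1)) ?q"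
      unfolding MHS_replicate by (rule rat_cong0_sum_tuples[OF relabel_closed_strict assms(3,4) that])
    moreover have "rat_cong0 (MHSS (replicate l s) (p - 1)) ?q"
      unfolding MHSS_replicate by (rule rat_cong0_sum_tuples[OF relabel_closed_weak assms(3,4) that])
    moreover have "rat_cong0 (MHS (replicate l s) (p - 1)) (int p)"
      by (rule rat_cong0_dvd[OF H]) (simp add: par_def)
    ultimately show ?thesis
      by blast
  qed
  \<comment> \<open>Only the case k = l of the hypothesis on k s + 1 is needed, and p \<ge> l + 2 is not needed.\<close>
  have "\<not> (p - 1) dvd (l * s + 1)" if "\<forall>k\<in>{1..l}. \<not> (p - 1) dvd (k * s + 1)"
    using bspec[OF that, of l] assms(2) by simp
  moreover have "\<not> (p - 1) dvd (s * l) \<and> \<not> (p - 1) dvd (l * s + 1)" if "p \<ge> l * s + 3"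
    using that dvd_imp_le[of "p - 1" "l * s"] dvd_imp_le[of "p - 1" "l * s + 1"] assms(1,2)
    by (auto simp: mult.commute)
  ultimately show ?thesis
    using congs by blast
qed

end
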